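(* For any $a,b\in\mathbb{Z}[\tau]$ with $0<a<b<1$, the subgroup $F_\tau[a,b]$ is isomorphic to $F_\tau$.
   Context: Let $\tau=\frac{\sqrt5-1}{2}$ (a root of $X^2+X-1$, a unit of the ring $\mathbb{Z}[\tau]$). $F_\tau$ denotes the group of piecewise linear homeomorphisms of $[0,1]$ with finitely many breakpoints, all breakpoints in $\mathbb{Z}[\tau]$, and all slopes integer powers of $\tau$ (i.e. $G([0,1];\mathbb{Z}[\tau],\langle\tau\rangle)$ in Bieri–Strebel notation). For $a,b\in\mathbb{Z}[\tau]$ with $0<a<b<1$, $F_\tau[a,b]$ denotes the subgroup of $F_\tau$ consisting of those elements whose support is included in $[a,b]$. *)

theory Defs
  imports "HOL-Analysis.Analysis" "HOL-Algebra.Group"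
begin

definition tau :: real where
  "tau = (sqrt 5 - 1) / 2"

definition Ztau :: "real set" where
  "Ztau = {of_int m + of_int n * tau | m n. True}"

text \<open>Elements of F_tau, represented as maps real => real that are the identity
outside [0,1]. Such a map is a PL
homeomorphism of [0,1] (positive slopes, continuous, f 0 = 0, f 1 = 1), and
every element of G([0,1]; Z[tau], <tau>) is of this form.\<close>
definition F_tau_elem :: "(real \<Rightarrow> real) \<Rightarrow> bool" where
  "F_tau_elem f \<longleftrightarrow>
     (\<forall>x. x \<notin> {0..1} \<longrightarrow> f x = x) \<and> f 0 = 0 \<and> f 1 = 1 \<and>
     (\<exists>xs :: real list. \<exists>ks :: int list.
        length xs = length ks + 1 \<and> hd xs = 0 \<and> last xs = 1 \<and>
        sorted_wrt (<) xs \<and> set xs \<subseteq> Ztau \<and>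
        (\<forall>i < length ks. \<forall>x \<in> {xs ! i .. xs ! Suc i}.
            f x = f (xs ! i) + tau powi (ks ! i) * (x - xs ! i)))"

definition F_tau :: "(real \<Rightarrow> real) monoid" where
  "F_tau = \<lparr>carrier = {f. F_tau_elem f}, mult = (\<circ>), one = id\<rparr>"

definition supp :: "(real \<Rightarrow> real) \<Rightarrow> real set" where
  "supp f = closure {x \<in> {0..1}. f x \<noteq> x}"

definition F_tau_sub :: "real \<Rightarrow> real \<Rightarrow> (real \<Rightarrow> real) monoid" where
  "F_tau_sub a b = F_tau\<lparr>carrier := {f \<in> carrier F_tau. supp f \<subseteq> {a..b}}\<rparr>"

end

(*
  Conjugation by a homeomorphism h of the real line that maps [a, b] onto [0, 1] piecewise
  affinely, with breakpoints in Z[tau] and slopes in tau^Z, and is a translation outside [a, b],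
  carries F_tau[a, b] onto F_tau.  Such an h exists as soon as b - a is a positive element of
  Z[tau].  Indeed, the lengths L for which [0, L] is equivalent to [0, 1] in this sense contain
  every tau^k (scaling) and are closed under addition, because 1 = tau + tau^2 ~ tau + tau = 2 tau
  ~ 2 folds [0, 2] back onto [0, 1]; and every positive element of Z[tau] is a sum of powers of
  tau, by the descent m tau^j + n tau^(j+1) = (m + n) tau^(j+1) + m tau^(j+2).
*)

theory Submission
  imports Defs
begin

lemma tau_pos: "0 < tau"
proof -
  have "1 < sqrt 5" by (simp add: real_less_rsqrt)
  then show ?thesis unfolding tau_def by simp
qed

lemma tau_less_1: "tau < 1"
proof -
  have "sqrt 5 < 3" by (simp add: real_sqrt_less_iff real_less_lsqrt)
  then show ?thesis unfolding tau_def by simp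
qed

lemma tau_square: "tau * tau = 1 - tau"
  unfolding tau_def by (simp add: field_simps)

lemma inverse_tau: "inverse tau = 1 + tau"
  using tau_square tau_pos by (simp add: field_simps)

lemma tau_powi_pos [simp]: "0 < tau powi k"
  using tau_pos by simp

lemma tau_powi_add: "tau powi (j + k) = tau powi j * tau powi k"
  using tau_pos by (simp add: power_int_add)

lemma tau_powi_uminus_mult [simp]: "tau powi (- k) * tau powi k = 1"
  using tau_pos by (simp add: power_int_minus)

lemma tau_powi_mult_uminus [simp]: "tau powi k * tau powi (- k) = 1"
  using tau_pos by (simp add: power_int_minus)

lemma tau_powi_split: "tau powi j = tau powi (j + 1) + tau powi (j + 2)"
proof -
  have "tau powi (j + 1) + tau powi (j + 2) = tau powi j * (tau + tau * tau)"
    by (simp add: tau_powi_add power2_eq_square algebra_simps)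
  then show ?thesis by (simp add: tau_square)
qed

subsection \<open>The ring Z[tau]\<close>

lemma Ztau_iff: "x \<in> Ztau \<longleftrightarrow> (\<exists>m n. x = of_int m + of_int n * tau)"
  unfolding Ztau_def by auto

lemma Ztau_of_int [simp, intro]: "of_int m \<in> Ztau"
  unfolding Ztau_iff by (rule exI[of _ m], rule exI[of _ 0]) simp

lemma Ztau_0 [simp, intro]: "0 \<in> Ztau"
  using Ztau_of_int[of 0] by simp

lemma Ztau_1 [simp, intro]: "1 \<in> Ztau"
  using Ztau_of_int[of 1] by simp

lemma Ztau_tau [simp, intro]: "tau \<in> Ztau"
  unfolding Ztau_iff by (rule exI[of _ 0], rule exI[of _ 1]) simp

lemma Ztau_add [intro]: "x \<in> Ztau \<Longrightarrow> y \<in> Ztau \<Longrightarrow> x + y \<in> Ztau"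
proof -
  assume "x \<in> Ztau" "y \<in> Ztau"
  then obtain m n p q where "x = of_int m + of_int n * tau" "y = of_int p + of_int q * tau"
    unfolding Ztau_iff by blast
  then have "x + y = of_int (m + p) + of_int (n + q) * tau"
    by (simp add: algebra_simps)
  then show ?thesis unfolding Ztau_iff by blast
qed

lemma Ztau_uminus [intro]: "x \<in> Ztau \<Longrightarrow> - x \<in> Ztau"
proof -
  assume "x \<in> Ztau"
  then obtain m n where "x = of_int m + of_int n * tau"
    unfolding Ztau_iff by blast
  then have "- x = of_int (- m) + of_int (- n) * tau"
    by simp
  then show ?thesis unfolding Ztau_iff by blast
qed

lemma Ztau_diff [intro]: "x \<in> Ztau \<Longrightarrow> y \<in> Ztau \<Longrightarrow> x - y \<in> Ztau"
  using Ztau_add[of x "- y"] by auto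

lemma Ztau_mult [intro]: "x \<in> Ztau \<Longrightarrow> y \<in> Ztau \<Longrightarrow> x * y \<in> Ztau"
proof -
  assume "x \<in> Ztau" "y \<in> Ztau"
  then obtain m n p q where "x = of_int m + of_int n * tau" "y = of_int p + of_int q * tau"
    unfolding Ztau_iff by blast
  then have "x * y = of_int (m * p) + of_int (m * q + n * p) * tau + of_int (n * q) * (tau * tau)"
    by (simp add: algebra_simps)
  also have "\<dots> = of_int (m * p + n * q) + of_int (m * q + n * p - n * q) * tau"
    by (simp add: tau_square algebra_simps)
  finally have "x * y = of_int (m * p + n * q) + of_int (m * q + n * p - n * q) * tau" .
  then show ?thesis unfolding Ztau_iff by blast
qed

lemma Ztau_power: "x \<in> Ztau \<Longrightarrow> x ^ n \<in> Ztau"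
  by (induction n) auto

lemma Ztau_tau_powi [simp, intro]: "tau powi k \<in> Ztau"
proof (cases "0 \<le> k")
  case True
  then show ?thesis by (metis Ztau_power Ztau_tau nonneg_int_cases power_int_of_nat)
next
  case False
  then obtain n where "k = - int n" by (metis neg_int_cases not_le)
  then have "tau powi k = (1 + tau) ^ n"
    by (simp add: power_int_minus inverse_tau [symmetric] power_inverse)
  then show ?thesis by (simp add: Ztau_power Ztau_add)
qed

definition affine_on :: "real set \<Rightarrow> real \<Rightarrow> (real \<Rightarrow> real) \<Rightarrow> bool" where
  "affine_on S s f \<longleftrightarrow> (\<forall>t\<in>S. \<forall>u\<in>S. f u = f t + s * (u - t))"

lemma affine_onD: "affine_on S s f \<Longrightarrow> t \<in> S \<Longrightarrow> u \<in> S \<Longrightarrow> f u = f t + s * (u - t)"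
  unfolding affine_on_def by blast

lemma affine_on_interval_iff:
  assumes "x \<le> y"
  shows "affine_on {x..y} s f \<longleftrightarrow> (\<forall>t\<in>{x..y}. f t = f x + s * (t - x))"
proof
  assume base: "\<forall>t\<in>{x..y}. f t = f x + s * (t - x)"
  show "affine_on {x..y} s f"
    unfolding affine_on_def
  proof (intro ballI)
    fix t u assume "t \<in> {x..y}" "u \<in> {x..y}"
    then have "f t = f x + s * (t - x)" "f u = f x + s * (u - x)"
      using base by blast+
    then show "f u = f t + s * (u - t)" by (simp add: right_diff_distrib)
  qed
next
  assume f: "affine_on {x..y} s f"
  show "\<forall>t\<in>{x..y}. f t = f x + s * (t - x)"
  proof
    fix t assume "t \<in> {x..y}"
    then show "f t = f x + s * (t - x)" using assms by (intro affine_onD[OF f]) auto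
  qed
qed

lemma affine_on_intervalD:
  "affine_on {x..y} s f \<Longrightarrow> x \<le> t \<Longrightarrow> t \<le> y \<Longrightarrow> f t = f x + s * (t - x)"
  using affine_onD[of "{x..y}" s f x t] by simp

lemma affine_on_subset: "affine_on S s f \<Longrightarrow> T \<subseteq> S \<Longrightarrow> affine_on T s f"
  unfolding affine_on_def by blast

lemma affine_on_cong:
  assumes "affine_on S s f" "\<And>x. x \<in> S \<Longrightarrow> f x = g x"
  shows "affine_on S s g"
proof -
  have "g u = g t + s * (u - t)" if "t \<in> S" "u \<in> S" for t u
    using affine_onD[OF assms(1) that] assms(2) that by simp
  then show ?thesis unfolding affine_on_def by blast
qed

lemma affine_on_comp:
  assumes "affine_on S s f" "affine_on (f ` S) r g"
  shows "affine_on S (r * s) (g \<circ> f)"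
  unfolding affine_on_def
proof (intro ballI)
  fix t u assume "t \<in> S" "u \<in> S"
  then have "g (f u) = g (f t) + r * (f u - f t)" "f u = f t + s * (u - t)"
    using assms by (blast intro: affine_onD imageI)+
  then show "(g \<circ> f) u = (g \<circ> f) t + r * s * (u - t)" by simp
qed

lemma affine_on_linear: "affine_on S a (\<lambda>x. a * x + b)"
  unfolding affine_on_def by (simp add: algebra_simps)

lemma affine_on_fixes_all:
  assumes f: "affine_on S s f" and "u \<in> S" "v \<in> S" "u \<noteq> v" "f u = u" "f v = v" "t \<in> S"
  shows "f t = t"
proof -
  have "(s - 1) * (v - u) = 0"
    using affine_onD[OF f \<open>u \<in> S\<close> \<open>v \<in> S\<close>] assms by (simp add: algebra_simps)
  then have "s = 1" using \<open>u \<noteq> v\<close> by simp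
  then show ?thesis using affine_onD[OF f \<open>u \<in> S\<close> \<open>t \<in> S\<close>] \<open>f u = u\<close> by simp
qed

lemma affine_on_image_between:
  assumes f: "affine_on {x..y} s f" and "0 < s" "x \<le> y"
  shows "{f x<..<f y} \<subseteq> f ` {x<..<y}"
proof
  fix p assume p: "p \<in> {f x<..<f y}"
  define t where "t = x + (p - f x) / s"
  have slope: "s * (t - x) = p - f x" unfolding t_def using \<open>0 < s\<close> by simp
  have "s * (y - x) = f y - f x" using affine_onD[OF f, of x y] \<open>x \<le> y\<close> by simp
  then have "s * (t - x) < s * (y - x)" using slope p by simp
  then have "t < y" using mult_less_cancel_left_pos[OF \<open>0 < s\<close>] by simp
  moreover have "x < t" unfolding t_def using \<open>0 < s\<close> p by simp
  moreover from calculation have "f t = p" using affine_onD[OF f, of x t] slope by simp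
  ultimately show "p \<in> f ` {x<..<y}" by force
qed

subsection \<open>Piecewise affine maps with slopes in powers of tau\<close>

lemma finite_gap_below:
  fixes B :: "'a::linorder set"
  assumes "finite B" "z \<in> B" "z < x"
  shows "\<exists>w\<in>B. w < x \<and> B \<inter> {w<..<x} = {}"
proof -
  let ?S = "{w\<in>B. w < x}"
  have S: "finite ?S" "?S \<noteq> {}" using assms by auto
  then have "Max ?S \<in> B" "Max ?S < x" using Max_in by auto
  moreover have "B \<inter> {Max ?S<..<x} = {}" using Max_ge[OF S(1)] by fastforce
  ultimately show ?thesis by blast
qed

lemma finite_gap_above:
  fixes B :: "'a::linorder set"
  assumes "finite B" "z \<in> B" "x < z"
  shows "\<exists>y\<in>B. x < y \<and> B \<inter> {x<..<y} = {}"
proof -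
  let ?S = "{y\<in>B. x < y}"
  have S: "finite ?S" "?S \<noteq> {}" using assms by auto
  then have "Min ?S \<in> B" "x < Min ?S" using Min_in by auto
  moreover have "B \<inter> {x<..<Min ?S} = {}" using Min_le[OF S(1)] by fastforce
  ultimately show ?thesis by blast
qed

text \<open>The finite set \<open>B\<close> contains the breakpoints of \<open>f\<close> on \<open>[c, d]\<close>, possibly together with
  further points; the values of \<open>f\<close> outside \<open>[c, d]\<close> are irrelevant.\<close>

definition tau_pl_on :: "real \<Rightarrow> real \<Rightarrow> real set \<Rightarrow> (real \<Rightarrow> real) \<Rightarrow> bool" where
  "tau_pl_on c d B f \<longleftrightarrow> c < d \<and> finite B \<and> B \<subseteq> Ztau \<and> B \<subseteq> {c..d} \<and> c \<in> B \<and> d \<in> B \<and>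
     f ` B \<subseteq> Ztau \<and>
     (\<forall>x y. c \<le> x \<longrightarrow> x < y \<longrightarrow> y \<le> d \<longrightarrow> B \<inter> {x<..<y} = {} \<longrightarrow>
        (\<exists>k. affine_on {x..y} (tau powi k) f))"

lemma tau_pl_onD:
  assumes "tau_pl_on c d B f"
  shows "c < d" "finite B" "B \<subseteq> Ztau" "B \<subseteq> {c..d}" "c \<in> B" "d \<in> B" "f ` B \<subseteq> Ztau"
  using assms unfolding tau_pl_on_def by blast+

lemma tau_pl_on_affine:
  assumes "tau_pl_on c d B f" "c \<le> x" "x < y" "y \<le> d" "B \<inter> {x<..<y} = {}"
  shows "\<exists>k. affine_on {x..y} (tau powi k) f"
  using assms unfolding tau_pl_on_def by blast

lemma tau_pl_onI:
  assumes "c < d" "finite B" "B \<subseteq> Ztau" "B \<subseteq> {c..d}" "c \<in> B" "d \<in> B" "f ` B \<subseteq> Ztau"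
    and "\<And>x y. c \<le> x \<Longrightarrow> x < y \<Longrightarrow> y \<le> d \<Longrightarrow> B \<inter> {x<..<y} = {} \<Longrightarrow>
      \<exists>k. affine_on {x..y} (tau powi k) f"
  shows "tau_pl_on c d B f"
  using assms unfolding tau_pl_on_def by blast

lemma tau_pl_on_piece_below:
  assumes f: "tau_pl_on c d B f" and "c < x" "x \<le> d"
  obtains w k where "w \<in> B" "c \<le> w" "w < x" "affine_on {w..x} (tau powi k) f"
proof -
  obtain w where "w \<in> B" "w < x" "B \<inter> {w<..<x} = {}"
    using finite_gap_below[of B c x] tau_pl_onD[OF f] assms by blast
  moreover have "c \<le> w" using \<open>w \<in> B\<close> tau_pl_onD(4)[OF f] by auto
  ultimately show ?thesis using that tau_pl_on_affine[OF f] assms by blast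
qed

lemma tau_pl_on_piece_above:
  assumes f: "tau_pl_on c d B f" and "c \<le> x" "x < d"
  obtains y k where "y \<in> B" "x < y" "y \<le> d" "affine_on {x..y} (tau powi k) f"
proof -
  obtain y where "y \<in> B" "x < y" "B \<inter> {x<..<y} = {}"
    using finite_gap_above[of B d x] tau_pl_onD[OF f] assms by blast
  moreover have "y \<le> d" using \<open>y \<in> B\<close> tau_pl_onD(4)[OF f] by auto
  ultimately show ?thesis using that tau_pl_on_affine[OF f] assms by blast
qed

lemma tau_pl_on_strict_mono:
  assumes f: "tau_pl_on c d B f" and "c \<le> x" "x < y" "y \<le> d"
  shows "f x < f y"
proof -
  have "f x < f y" if "card (B \<inter> {x<..<y}) = n" "c \<le> x" "x < y" "y \<le> d" for n x y
    using that
  proof (induction n arbitrary: x y rule: less_induct)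
    case (less n)
    show ?case
    proof (cases "B \<inter> {x<..<y} = {}")
      case True
      then obtain k where "affine_on {x..y} (tau powi k) f"
        using tau_pl_on_affine[OF f] less.prems by blast
      then have "f y = f x + tau powi k * (y - x)"
        using affine_on_intervalD[of x y _ f y] less.prems by simp
      moreover have "0 < tau powi k * (y - x)" using less.prems by simp
      ultimately show ?thesis by linarith
    next
      case False
      then obtain z where z: "z \<in> B" "x < z" "z < y" by auto
      have fin: "finite (B \<inter> {x<..<y})" using tau_pl_onD(2)[OF f] by simp
      have "card (B \<inter> {x<..<z}) < n" "card (B \<inter> {z<..<y}) < n"
        using z less.prems(1) by (auto intro!: psubset_card_mono[OF fin])
      then have "f x < f z" "f z < f y"
        using less.IH less.prems z by auto
      then show ?thesis by simp
    qed
  qed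
  then show ?thesis using assms by blast
qed

lemma tau_pl_on_mono:
  assumes "tau_pl_on c d B f" "c \<le> x" "x \<le> y" "y \<le> d"
  shows "f x \<le> f y"
  using tau_pl_on_strict_mono[OF assms(1)] assms by (cases "x = y") (auto intro: less_imp_le)

lemma tau_pl_on_image_subset:
  assumes "tau_pl_on c d B f" "c \<le> x" "y \<le> d"
  shows "f ` {x..y} \<subseteq> {f x..f y}"
  using tau_pl_on_mono[OF assms(1)] assms by auto

lemma tau_pl_on_inj_on: "tau_pl_on c d B f \<Longrightarrow> inj_on f {c..d}"
  by (rule inj_onI) (metis atLeastAtMost_iff linorder_neqE_linordered_idom less_irrefl
      tau_pl_on_strict_mono)

lemma tau_pl_on_value_in_Ztau:
  assumes f: "tau_pl_on c d B f" and "x \<in> {c..d}" "x \<in> Ztau"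
  shows "f x \<in> Ztau"
proof (cases "x = c")
  case True
  then show ?thesis using tau_pl_onD[OF f] by auto
next
  case False
  obtain w k where w: "w \<in> B" "c \<le> w" "w < x" "affine_on {w..x} (tau powi k) f"
    by (rule tau_pl_on_piece_below[OF f]) (use assms False in auto)
  then have "f x = f w + tau powi k * (x - w)" using affine_on_intervalD[of w x _ f x] w by simp
  moreover have "w \<in> Ztau" "f w \<in> Ztau" using w tau_pl_onD[OF f] by auto
  ultimately show ?thesis using assms by (auto intro!: Ztau_add Ztau_mult Ztau_diff)
qed

lemma tau_pl_on_preimage_in_Ztau:
  assumes f: "tau_pl_on c d B f" and "x \<in> {c..d}" "f x \<in> Ztau"
  shows "x \<in> Ztau"
proof (cases "x = c")
  case True
  then show ?thesis using tau_pl_onD[OF f] by auto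
next
  case False
  obtain w k where w: "w \<in> B" "c \<le> w" "w < x" "affine_on {w..x} (tau powi k) f"
    by (rule tau_pl_on_piece_below[OF f]) (use assms False in auto)
  then have "f x = f w + tau powi k * (x - w)" using affine_on_intervalD[of w x _ f x] w by simp
  then have "x = w + tau powi (- k) * (f x - f w)"
    by (simp flip: mult.assoc)
  moreover have "w \<in> Ztau" "f w \<in> Ztau" using w tau_pl_onD[OF f] by auto
  ultimately show ?thesis using assms by (metis Ztau_add Ztau_diff Ztau_mult Ztau_tau_powi)
qed

lemma tau_pl_on_cong:
  assumes "tau_pl_on c d B f" "\<And>x. x \<in> {c..d} \<Longrightarrow> f x = g x"
  shows "tau_pl_on c d B g"
proof (rule tau_pl_onI)
  show "g ` B \<subseteq> Ztau"
  proof (rule image_subsetI)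
    fix x assume "x \<in> B"
    then have "x \<in> {c..d}" "f x \<in> Ztau" using tau_pl_onD(4,7)[OF assms(1)] by auto
    then show "g x \<in> Ztau" using assms(2) by metis
  qed
next
  fix x y assume xy: "c \<le> x" "x < y" "y \<le> d" "B \<inter> {x<..<y} = {}"
  then obtain k where "affine_on {x..y} (tau powi k) f" using tau_pl_on_affine[OF assms(1)] by blast
  then have "affine_on {x..y} (tau powi k) g" by (rule affine_on_cong) (use xy assms(2) in auto)
  then show "\<exists>k. affine_on {x..y} (tau powi k) g" ..
qed (use tau_pl_onD[OF assms(1)] in auto)

lemma tau_pl_on_affine_map:
  assumes "c < d" "c \<in> Ztau" "d \<in> Ztau" "f c \<in> Ztau" "affine_on {c..d} (tau powi k) f"
  shows "tau_pl_on c d {c, d} f"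
proof (rule tau_pl_onI)
  have "f d = f c + tau powi k * (d - c)"
    using affine_on_intervalD[OF assms(5), of d] assms(1) by simp
  then show "f ` {c, d} \<subseteq> Ztau" using assms by auto
next
  fix x y assume "c \<le> x" "y \<le> d"
  then show "\<exists>k'. affine_on {x..y} (tau powi k') f"
    using affine_on_subset[OF assms(5), of "{x..y}"] by auto
qed (use assms in auto)

lemma tau_pl_on_identity:
  assumes "c < d" "c \<in> Ztau" "d \<in> Ztau" "\<And>x. x \<in> {c..d} \<Longrightarrow> f x = x"
  shows "tau_pl_on c d {c, d} f"
proof (rule tau_pl_on_affine_map[where k = 0])
  show "affine_on {c..d} (tau powi 0) f"
    using affine_on_cong[OF affine_on_linear[of "{c..d}" 1 0], of f] assms(4) by simp
qed (use assms in auto)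

lemma tau_pl_on_concat:
  assumes "tau_pl_on c d B f" "tau_pl_on d e C f"
  shows "tau_pl_on c e (B \<union> C) f"
proof (rule tau_pl_onI)
  fix x y assume xy: "c \<le> x" "x < y" "y \<le> e" "(B \<union> C) \<inter> {x<..<y} = {}"
  have "d \<le> x \<or> y \<le> d" using xy(4) tau_pl_onD(6)[OF assms(1)] by auto
  then show "\<exists>k. affine_on {x..y} (tau powi k) f"
    using xy tau_pl_on_affine[OF assms(1), of x y] tau_pl_on_affine[OF assms(2), of x y] by auto
qed (use tau_pl_onD[OF assms(1)] tau_pl_onD[OF assms(2)] in auto)

lemma tau_pl_on_comp:
  assumes f: "tau_pl_on c d B f" and g: "tau_pl_on c' d' C g" and im: "f ` {c..d} \<subseteq> {c'..d'}"
  shows "tau_pl_on c d (B \<union> (f -` C \<inter> {c..d})) (g \<circ> f)"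
proof (rule tau_pl_onI)
  let ?B = "B \<union> (f -` C \<inter> {c..d})"
  show "finite ?B"
    using tau_pl_onD(2)[OF f] tau_pl_onD(2)[OF g] tau_pl_on_inj_on[OF f]
    by (auto intro: finite_vimage_IntI)
  show "?B \<subseteq> Ztau"
    using tau_pl_onD(3)[OF f] tau_pl_onD(3)[OF g] tau_pl_on_preimage_in_Ztau[OF f] by auto
  show "(g \<circ> f) ` ?B \<subseteq> Ztau"
  proof (rule image_subsetI)
    fix z assume "z \<in> ?B"
    then have "z \<in> {c..d}" "z \<in> Ztau"
      using tau_pl_onD(3,4)[OF f] \<open>?B \<subseteq> Ztau\<close> by auto
    then have "f z \<in> {c'..d'}" "f z \<in> Ztau"
      using im tau_pl_on_value_in_Ztau[OF f] by blast+
    then show "(g \<circ> f) z \<in> Ztau" using tau_pl_on_value_in_Ztau[OF g] by simp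
  qed
next
  fix x y assume xy: "c \<le> x" "x < y" "y \<le> d" "(B \<union> (f -` C \<inter> {c..d})) \<inter> {x<..<y} = {}"
  then obtain k where k: "affine_on {x..y} (tau powi k) f"
    using tau_pl_on_affine[OF f, of x y] by auto
  have "x \<in> {c..d}" "y \<in> {c..d}" using xy by auto
  then have "f x \<in> {c'..d'}" "f y \<in> {c'..d'}" using im by blast+
  then have fxy: "f x < f y" "c' \<le> f x" "f y \<le> d'"
    using tau_pl_on_strict_mono[OF f xy(1-3)] by auto
  have "{x<..<y} \<subseteq> {c..d}" using xy by auto
  then have "C \<inter> {f x<..<f y} = {}"
    using affine_on_image_between[OF k tau_powi_pos less_imp_le[OF xy(2)]] xy(4) by blast
  then obtain j where "affine_on {f x..f y} (tau powi j) g"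
    using tau_pl_on_affine[OF g] fxy by blast
  then have "affine_on (f ` {x..y}) (tau powi j) g"
    using tau_pl_on_image_subset[OF f] xy by (blast intro: affine_on_subset)
  then have "affine_on {x..y} (tau powi (j + k)) (g \<circ> f)"
    using affine_on_comp[OF k] by (simp add: tau_powi_add)
  then show "\<exists>k. affine_on {x..y} (tau powi k) (g \<circ> f)" ..
qed (use tau_pl_onD[OF f] in auto)

lemma tau_pl_on_fixed_below:
  assumes f: "tau_pl_on c d B f" and "c < a" "a \<le> d" "\<And>x. c \<le> x \<Longrightarrow> x < a \<Longrightarrow> f x = x"
  shows "f a = a"
proof -
  obtain w k where w: "c \<le> w" "w < a" "affine_on {w..a} (tau powi k) f"
    by (rule tau_pl_on_piece_below[OF f]) (use assms in auto)
  show ?thesis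
    by (rule affine_on_fixes_all[OF w(3), of w "(w + a) / 2"]) (use w assms in auto)
qed

lemma tau_pl_on_fixed_above:
  assumes f: "tau_pl_on c d B f" and "c \<le> b" "b < d" "\<And>x. b < x \<Longrightarrow> x \<le> d \<Longrightarrow> f x = x"
  shows "f b = b"
proof -
  obtain y k where y: "b < y" "y \<le> d" "affine_on {b..y} (tau powi k) f"
    by (rule tau_pl_on_piece_above[OF f]) (use assms in auto)
  show ?thesis
    by (rule affine_on_fixes_all[OF y(3), of "(b + y) / 2" y]) (use y assms in auto)
qed

lemma sorted_wrt_less_hd_last:
  fixes xs :: "'a::linorder list"
  assumes "sorted_wrt (<) xs" "z \<in> set xs"
  shows "hd xs \<le> z" "z \<le> last xs"
proof -
  obtain j where j: "j < length xs" "xs ! j = z" using assms(2) by (auto simp: in_set_conv_nth)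
  have ne: "xs \<noteq> []" using assms(2) by auto
  have "sorted xs" using assms(1) by (rule strict_sorted_imp_sorted)
  then show "hd xs \<le> z" "z \<le> last xs"
    using j sorted_nth_mono[of xs 0 j] sorted_nth_mono[of xs j "length xs - 1"]
    by (auto simp: hd_conv_nth[OF ne] last_conv_nth[OF ne])
qed

lemma sorted_wrt_less_consecutive_gap:
  fixes xs :: "'a::linorder list"
  assumes "sorted_wrt (<) xs" "Suc i < length xs"
  shows "set xs \<inter> {xs ! i<..<xs ! Suc i} = {}"
proof -
  have "xs ! j \<le> xs ! i \<or> xs ! Suc i \<le> xs ! j" if "j < length xs" for j
    using sorted_nth_mono[OF strict_sorted_imp_sorted[OF assms(1)]] that assms(2)
    by (cases "j \<le> i") auto
  then show ?thesis by (fastforce simp: in_set_conv_nth)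
qed

lemma sorted_wrt_less_segment:
  fixes xs :: "'a::linorder list"
  assumes "sorted_wrt (<) xs" "xs \<noteq> []" "hd xs \<le> x" "x < y" "y \<le> last xs"
    and "set xs \<inter> {x<..<y} = {}"
  shows "\<exists>i. Suc i < length xs \<and> xs ! i \<le> x \<and> y \<le> xs ! Suc i"
proof -
  let ?I = "{i. i < length xs \<and> xs ! i \<le> x}"
  define i where "i = Max ?I"
  have fin: "finite ?I" by simp
  have "0 \<in> ?I" using assms(2,3) by (simp add: hd_conv_nth)
  then have "i \<in> ?I" unfolding i_def using Max_in[OF fin] by blast
  then have i: "i < length xs" "xs ! i \<le> x" by auto
  have "i \<noteq> length xs - 1" using i assms(2,4,5) by (auto simp: last_conv_nth)
  then have Suc_i: "Suc i < length xs" using i(1) by simp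
  have "Suc i \<notin> ?I"
  proof
    assume "Suc i \<in> ?I"
    then have "Suc i \<le> i" unfolding i_def by (rule Max_ge[OF fin])
    then show False by simp
  qed
  then have "x < xs ! Suc i" using Suc_i by auto
  then have "y \<le> xs ! Suc i"
    using assms(6) nth_mem[OF Suc_i] by (meson disjoint_iff greaterThanLessThan_iff not_le)
  then show ?thesis using Suc_i i(2) by blast
qed

lemma tau_affine_chain_values_in_Ztau:
  assumes S: "sorted_wrt (<) xs" and Z: "set xs \<subseteq> Ztau" "f (hd xs) \<in> Ztau"
    and aff: "\<And>i. Suc i < length xs \<Longrightarrow> \<exists>k. affine_on {xs ! i..xs ! Suc i} (tau powi k) f"
  shows "f ` set xs \<subseteq> Ztau"
proof -
  have "f (xs ! i) \<in> Ztau" if "i < length xs" for i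
    using that
  proof (induction i)
    case 0
    then have "xs \<noteq> []" by auto
    then show ?case using Z(2) by (simp add: hd_conv_nth)
  next
    case (Suc i)
    obtain k where k: "affine_on {xs ! i..xs ! Suc i} (tau powi k) f" using aff Suc.prems by blast
    have "xs ! i < xs ! Suc i" using sorted_wrt_nth_less[OF S, of i "Suc i"] Suc.prems by simp
    then have "f (xs ! Suc i) = f (xs ! i) + tau powi k * (xs ! Suc i - xs ! i)"
      using affine_on_intervalD[OF k, of "xs ! Suc i"] by simp
    moreover have "xs ! i \<in> Ztau" "xs ! Suc i \<in> Ztau" using Z(1) Suc.prems by auto
    ultimately show ?case using Suc by (auto intro!: Ztau_add Ztau_mult Ztau_diff)
  qed
  then show ?thesis by (auto simp: in_set_conv_nth)
qed

lemma F_tau_elem_imp_tau_pl_on: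
  assumes "F_tau_elem f"
  shows "\<exists>B. tau_pl_on 0 1 B f"
proof -
  obtain xs :: "real list" and ks :: "int list" where
    L: "length xs = length ks + 1" and hd: "hd xs = 0" and last: "last xs = 1" and
    S: "sorted_wrt (<) xs" and Z: "set xs \<subseteq> Ztau" and
    A: "\<forall>i < length ks. \<forall>x \<in> {xs ! i .. xs ! Suc i}.
          f x = f (xs ! i) + tau powi (ks ! i) * (x - xs ! i)"
    using assms unfolding F_tau_elem_def by blast
  have "f 0 = 0" using assms unfolding F_tau_elem_def by blast
  have ne: "xs \<noteq> []" using L by auto
  have aff: "affine_on {xs ! i..xs ! Suc i} (tau powi (ks ! i)) f" if "Suc i < length xs" for i
  proof -
    have "i < length ks" using that L by simp
    then have "\<forall>x\<in>{xs ! i..xs ! Suc i}. f x = f (xs ! i) + tau powi (ks ! i) * (x - xs ! i)"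
      using A by blast
    moreover have "xs ! i \<le> xs ! Suc i" using sorted_wrt_nth_less[OF S, of i "Suc i"] that by simp
    ultimately show ?thesis using affine_on_interval_iff by blast
  qed
  have "tau_pl_on 0 1 (set xs) f"
  proof (rule tau_pl_onI)
    show "set xs \<subseteq> {0..1}" using sorted_wrt_less_hd_last[OF S] hd last by fastforce
    show "0 \<in> set xs" "1 \<in> set xs" using hd_in_set[OF ne] last_in_set[OF ne] hd last by auto
    show "f ` set xs \<subseteq> Ztau"
      by (rule tau_affine_chain_values_in_Ztau[OF S Z]) (use aff hd \<open>f 0 = 0\<close> in auto)
  next
    fix x y assume xy: "0 \<le> x" "x < y" "y \<le> 1" "set xs \<inter> {x<..<y} = {}"
    then obtain i where i: "Suc i < length xs" "xs ! i \<le> x" "y \<le> xs ! Suc i"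
      using sorted_wrt_less_segment[OF S ne, of x y] hd last by auto
    then have "{x..y} \<subseteq> {xs ! i..xs ! Suc i}" by auto
    then show "\<exists>k. affine_on {x..y} (tau powi k) f"
      using aff[OF i(1)] affine_on_subset by blast
  qed (use Z in auto)
  then show ?thesis ..
qed

lemma tau_pl_on_consecutive_breakpoints:
  assumes f: "tau_pl_on c d B f" and S: "sorted_wrt (<) xs" "set xs = B"
    and i: "Suc i < length xs"
  shows "\<exists>k. affine_on {xs ! i..xs ! Suc i} (tau powi k) f"
proof -
  have "xs ! i \<in> B" "xs ! Suc i \<in> B" using i S(2) nth_mem by (metis Suc_lessD)+
  then have "c \<le> xs ! i" "xs ! Suc i \<le> d" using tau_pl_onD(4)[OF f] by auto
  moreover have "xs ! i < xs ! Suc i" using sorted_wrt_nth_less[OF S(1) _ i] by simp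
  moreover have "B \<inter> {xs ! i<..<xs ! Suc i} = {}"
    using sorted_wrt_less_consecutive_gap[OF S(1) i] S(2) by simp
  ultimately show ?thesis using tau_pl_on_affine[OF f] by blast
qed

lemma tau_pl_on_imp_F_tau_elem:
  assumes "\<forall>x. x \<notin> {0..1} \<longrightarrow> f x = x" "f 0 = 0" "f 1 = 1" and f: "tau_pl_on 0 1 B f"
  shows "F_tau_elem f"
proof -
  obtain xs where S: "sorted_wrt (<) xs" and set: "set xs = B"
    using ex1_sorted_list_for_set_if_finite[OF tau_pl_onD(2)[OF f]] by blast
  have B: "B \<subseteq> {0..1}" "0 \<in> B" "1 \<in> B" using tau_pl_onD[OF f] by auto
  have ne: "xs \<noteq> []" using B set by auto
  then have "hd xs \<in> B" "last xs \<in> B" using set hd_in_set last_in_set by blast+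
  then have "0 \<le> hd xs" "last xs \<le> 1" using B(1) by auto
  moreover have "hd xs \<le> 0" "1 \<le> last xs" using sorted_wrt_less_hd_last[OF S] B set by auto
  ultimately have hd: "hd xs = 0" and last: "last xs = 1" by auto
  define ks where "ks = map (\<lambda>i. SOME k. affine_on {xs ! i..xs ! Suc i} (tau powi k) f)
    [0..<length xs - 1]"
  have L: "length xs = length ks + 1" unfolding ks_def using ne by simp
  have aff: "affine_on {xs ! i..xs ! Suc i} (tau powi (ks ! i)) f" if "i < length ks" for i
  proof -
    have i: "Suc i < length xs" using that L by simp
    then have "ks ! i = (SOME k. affine_on {xs ! i..xs ! Suc i} (tau powi k) f)"
      unfolding ks_def by simp
    then show ?thesis using someI_ex[OF tau_pl_on_consecutive_breakpoints[OF f S set i]] by simp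
  qed
  have "\<forall>i < length ks. \<forall>x \<in> {xs ! i .. xs ! Suc i}.
      f x = f (xs ! i) + tau powi (ks ! i) * (x - xs ! i)"
  proof (intro allI impI ballI)
    fix i x assume "i < length ks" "x \<in> {xs ! i..xs ! Suc i}"
    then show "f x = f (xs ! i) + tau powi (ks ! i) * (x - xs ! i)"
      by (intro affine_on_intervalD[OF aff]) auto
  qed
  then show ?thesis
    unfolding F_tau_elem_def using assms(1-3) L hd last S set tau_pl_onD(3)[OF f] by blast
qed

lemma F_tau_elem_iff:
  "F_tau_elem f \<longleftrightarrow>
     (\<forall>x. x \<notin> {0..1} \<longrightarrow> f x = x) \<and> f 0 = 0 \<and> f 1 = 1 \<and> (\<exists>B. tau_pl_on 0 1 B f)"
proof -
  have "F_tau_elem f \<Longrightarrow> (\<forall>x. x \<notin> {0..1} \<longrightarrow> f x = x) \<and> f 0 = 0 \<and> f 1 = 1"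
    unfolding F_tau_elem_def by blast
  then show ?thesis using F_tau_elem_imp_tau_pl_on tau_pl_on_imp_F_tau_elem by blast
qed

subsection \<open>PL-equivalence of intervals\<close>

definition tau_pl_homeo ::
  "real \<Rightarrow> real \<Rightarrow> real \<Rightarrow> real \<Rightarrow> (real \<Rightarrow> real) \<Rightarrow> (real \<Rightarrow> real) \<Rightarrow> bool" where
  "tau_pl_homeo c d c' d' h g \<longleftrightarrow>
     (\<exists>B. tau_pl_on c d B h) \<and> (\<exists>C. tau_pl_on c' d' C g) \<and> h c = c' \<and> h d = d' \<and>
     (\<forall>x\<in>{c..d}. g (h x) = x) \<and> (\<forall>y\<in>{c'..d'}. h (g y) = y)"

lemma tau_pl_homeo_image:
  assumes "tau_pl_homeo c d c' d' h g"
  shows "h ` {c..d} \<subseteq> {c'..d'}"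
proof -
  obtain B where "tau_pl_on c d B h" using assms unfolding tau_pl_homeo_def by blast
  then show ?thesis
    using tau_pl_on_image_subset[of c d B h c d] assms unfolding tau_pl_homeo_def by simp
qed

lemma tau_pl_homeo_endpoints:
  assumes "tau_pl_homeo c d c' d' h g"
  shows "c < d" "c \<in> Ztau" "d \<in> Ztau"
  using assms tau_pl_onD(1,3,5,6) unfolding tau_pl_homeo_def by blast+

lemma tau_pl_homeo_sym:
  assumes "tau_pl_homeo c d c' d' h g"
  shows "tau_pl_homeo c' d' c d g h"
proof -
  have "c < d" using tau_pl_homeo_endpoints[OF assms] by simp
  then have "g c' = c" "g d' = d" using assms unfolding tau_pl_homeo_def by auto
  then show ?thesis using assms unfolding tau_pl_homeo_def by blast
qed

lemma tau_pl_homeo_trans: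
  assumes "tau_pl_homeo c d c' d' h g" "tau_pl_homeo c' d' c'' d'' h' g'"
  shows "tau_pl_homeo c d c'' d'' (h' \<circ> h) (g \<circ> g')"
proof -
  obtain B B' C C' where "tau_pl_on c d B h" "tau_pl_on c' d' B' h'"
    "tau_pl_on c' d' C g" "tau_pl_on c'' d'' C' g'"
    using assms unfolding tau_pl_homeo_def by blast
  then have "tau_pl_on c d (B \<union> (h -` B' \<inter> {c..d})) (h' \<circ> h)"
    "tau_pl_on c'' d'' (C' \<union> (g' -` C \<inter> {c''..d''})) (g \<circ> g')"
    using tau_pl_on_comp tau_pl_homeo_image[OF assms(1)]
      tau_pl_homeo_image[OF tau_pl_homeo_sym[OF assms(2)]] by blast+
  moreover have "h x \<in> {c'..d'}" if "x \<in> {c..d}" for x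
    using tau_pl_homeo_image[OF assms(1)] that by blast
  moreover have "g' y \<in> {c'..d'}" if "y \<in> {c''..d''}" for y
    using tau_pl_homeo_image[OF tau_pl_homeo_sym[OF assms(2)]] that by blast
  ultimately show ?thesis using assms unfolding tau_pl_homeo_def by auto
qed

lemma tau_pl_homeo_affine:
  assumes "c < d" "c \<in> Ztau" "d \<in> Ztau" "s \<in> Ztau"
  shows "tau_pl_homeo c d (tau powi k * c + s) (tau powi k * d + s)
    (\<lambda>x. tau powi k * x + s) (\<lambda>y. tau powi (- k) * (y - s))"
proof -
  let ?c' = "tau powi k * c + s" and ?d' = "tau powi k * d + s"
  have "?c' < ?d'" "?c' \<in> Ztau" "?d' \<in> Ztau" using assms by auto
  have inv: "tau powi (- k) * (tau powi k * x) = x" for x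
    by (simp flip: mult.assoc)
  have "tau_pl_on c d {c, d} (\<lambda>x. tau powi k * x + s)"
    using assms affine_on_linear by (intro tau_pl_on_affine_map) auto
  moreover have "affine_on {?c'..?d'} (tau powi (- k)) (\<lambda>y. tau powi (- k) * (y - s))"
    using affine_on_linear[of _ "tau powi (- k)" "- (tau powi (- k) * s)"]
    by (simp add: algebra_simps)
  then have "tau_pl_on ?c' ?d' {?c', ?d'} (\<lambda>y. tau powi (- k) * (y - s))"
    using \<open>?c' < ?d'\<close> \<open>?c' \<in> Ztau\<close> \<open>?d' \<in> Ztau\<close> assms(2) inv
    by (intro tau_pl_on_affine_map) auto
  ultimately show ?thesis
    unfolding tau_pl_homeo_def using inv by (auto simp flip: mult.assoc)
qed

definition glue_at :: "real \<Rightarrow> (real \<Rightarrow> real) \<Rightarrow> (real \<Rightarrow> real) \<Rightarrow> real \<Rightarrow> real" where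
  "glue_at d h h' x = (if x \<le> d then h x else h' x)"

lemma tau_pl_on_glue_at:
  assumes "tau_pl_on c d B h" "tau_pl_on d e C h'" "h d = h' d"
  shows "tau_pl_on c e (B \<union> C) (glue_at d h h')"
proof (rule tau_pl_on_concat)
  show "tau_pl_on c d B (glue_at d h h')"
    by (rule tau_pl_on_cong[OF assms(1)]) (simp add: glue_at_def)
  show "tau_pl_on d e C (glue_at d h h')"
    by (rule tau_pl_on_cong[OF assms(2)]) (use assms(3) in \<open>auto simp: glue_at_def\<close>)
qed

lemma glue_at_inverse:
  assumes "tau_pl_homeo c d c' d' h g" "tau_pl_homeo d e d' e' h' g'" "x \<in> {c..e}"
  shows "glue_at d' g g' (glue_at d h h' x) = x"
proof (cases "x \<le> d")
  case True
  then have "x \<in> {c..d}" using assms(3) by simp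
  moreover from this have "h x \<in> {c'..d'}" using tau_pl_homeo_image[OF assms(1)] by blast
  ultimately show ?thesis
    using assms(1) True unfolding glue_at_def tau_pl_homeo_def by simp
next
  case False
  obtain B where "tau_pl_on d e B h'" using assms(2) unfolding tau_pl_homeo_def by blast
  then have "h' d < h' x" using False assms(3) tau_pl_on_strict_mono by simp
  moreover have "x \<in> {d..e}" using False assms(3) by simp
  ultimately show ?thesis
    using False assms(2) unfolding glue_at_def tau_pl_homeo_def by auto
qed

lemma tau_pl_homeo_concat:
  assumes "tau_pl_homeo c d c' d' h g" "tau_pl_homeo d e d' e' h' g'"
  shows "tau_pl_homeo c e c' e' (glue_at d h h') (glue_at d' g g')"
proof -
  note sym = tau_pl_homeo_sym[OF assms(1)] tau_pl_homeo_sym[OF assms(2)]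
  obtain B B' C C' where "tau_pl_on c d B h" "tau_pl_on d e B' h'"
    "tau_pl_on c' d' C g" "tau_pl_on d' e' C' g'"
    using assms unfolding tau_pl_homeo_def by blast
  moreover have "h d = h' d" "g d' = g' d'"
    using assms sym unfolding tau_pl_homeo_def by simp_all
  ultimately have "tau_pl_on c e (B \<union> B') (glue_at d h h')"
    "tau_pl_on c' e' (C \<union> C') (glue_at d' g g')"
    using tau_pl_on_glue_at by blast+
  moreover have "c < d" "d < e" using tau_pl_homeo_endpoints assms by blast+
  then have "glue_at d h h' c = c'" "glue_at d h h' e = e'"
    using assms unfolding glue_at_def tau_pl_homeo_def by auto
  moreover have "\<forall>x\<in>{c..e}. glue_at d' g g' (glue_at d h h' x) = x"
    using glue_at_inverse[OF assms] by blast
  moreover have "\<forall>y\<in>{c'..e'}. glue_at d h h' (glue_at d' g g' y) = y"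
    using glue_at_inverse[OF sym] by blast
  ultimately show ?thesis unfolding tau_pl_homeo_def by blast
qed

definition tau_pl_equivalent :: "real \<Rightarrow> real \<Rightarrow> real \<Rightarrow> real \<Rightarrow> bool" where
  "tau_pl_equivalent c d c' d' \<longleftrightarrow> (\<exists>h g. tau_pl_homeo c d c' d' h g)"

lemma tau_pl_equivalent_Ztau:
  assumes "tau_pl_equivalent c d c' d'"
  shows "c < d" "c \<in> Ztau" "d \<in> Ztau"
  using assms tau_pl_homeo_endpoints unfolding tau_pl_equivalent_def by blast+

lemma tau_pl_equivalent_sym:
  "tau_pl_equivalent c d c' d' \<Longrightarrow> tau_pl_equivalent c' d' c d"
  unfolding tau_pl_equivalent_def using tau_pl_homeo_sym by blast

lemma tau_pl_equivalent_trans: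
  "tau_pl_equivalent c d c' d' \<Longrightarrow> tau_pl_equivalent c' d' c'' d'' \<Longrightarrow>
    tau_pl_equivalent c d c'' d''"
  unfolding tau_pl_equivalent_def using tau_pl_homeo_trans by blast

lemma tau_pl_equivalent_concat:
  "tau_pl_equivalent c d c' d' \<Longrightarrow> tau_pl_equivalent d e d' e' \<Longrightarrow>
    tau_pl_equivalent c e c' e'"
  unfolding tau_pl_equivalent_def using tau_pl_homeo_concat by blast

lemma tau_pl_equivalent_affine:
  assumes "c < d" "c \<in> Ztau" "d \<in> Ztau" "s \<in> Ztau"
    and "c' = tau powi k * c + s" "d' = tau powi k * d + s"
  shows "tau_pl_equivalent c d c' d'"
  unfolding tau_pl_equivalent_def using tau_pl_homeo_affine[OF assms(1-4)] assms(5,6) by blast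

lemma tau_pl_equivalent_translate:
  assumes "c < d" "c \<in> Ztau" "d \<in> Ztau" "s \<in> Ztau"
  shows "tau_pl_equivalent c d (c + s) (d + s)"
  by (rule tau_pl_equivalent_affine[OF assms, where k = 0]) simp_all

lemma tau_pl_equivalent_tau_powi: "tau_pl_equivalent 0 (tau powi k) 0 1"
  by (rule tau_pl_equivalent_affine[where k = "- k" and s = 0]) auto

lemma tau_pl_equivalent_two_one: "tau_pl_equivalent 0 2 0 1"
proof -
  have tau_inv: "tau powi (- 1) = 1 + tau" using inverse_tau by (simp add: power_int_minus)
  have "tau_pl_equivalent 0 tau 0 tau"
    using tau_pl_equivalent_translate[of 0 tau 0] tau_pos by simp
  moreover have "tau_pl_equivalent tau 1 tau (2 * tau)"
    using tau_pos tau_less_1 tau_inv tau_square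
    by (intro tau_pl_equivalent_affine[where k = "- 1" and s = "tau - 1"])
      (auto simp: algebra_simps)
  ultimately have "tau_pl_equivalent 0 1 0 (2 * tau)" by (rule tau_pl_equivalent_concat)
  moreover have "tau_pl_equivalent 0 (2 * tau) 0 2"
  proof (rule tau_pl_equivalent_affine[where k = "- 1" and s = 0])
    show "2 * tau \<in> Ztau" using Ztau_add[OF Ztau_tau Ztau_tau] by simp
    show "2 = tau powi (- 1) * (2 * tau) + 0" using tau_pos by (simp add: power_int_minus)
  qed (use tau_pos in auto)
  ultimately show ?thesis by (blast intro: tau_pl_equivalent_trans tau_pl_equivalent_sym)
qed

lemma tau_pl_equivalent_add:
  assumes "tau_pl_equivalent 0 x 0 1" "tau_pl_equivalent 0 y 0 1"
  shows "tau_pl_equivalent 0 (x + y) 0 1"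
proof -
  note x = tau_pl_equivalent_Ztau[OF assms(1)] and y = tau_pl_equivalent_Ztau[OF assms(2)]
  have "tau_pl_equivalent x (x + y) 0 y"
    using tau_pl_equivalent_translate[of x "x + y" "- x"] x y by auto
  moreover have "tau_pl_equivalent 0 1 1 2"
    using tau_pl_equivalent_translate[of 0 1 1] by simp
  ultimately have "tau_pl_equivalent x (x + y) 1 2"
    using assms(2) by (blast intro: tau_pl_equivalent_trans)
  with assms(1) have "tau_pl_equivalent 0 (x + y) 0 2"
    by (rule tau_pl_equivalent_concat)
  then show ?thesis
    using tau_pl_equivalent_two_one by (rule tau_pl_equivalent_trans)
qed

lemma tau_pl_equivalent_of_nat_mult:
  assumes "0 < n"
  shows "tau_pl_equivalent 0 (of_nat n * tau powi k) 0 1"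
  using assms
proof (induction n)
  case (Suc n)
  show ?case
  proof (cases "n = 0")
    case True
    then show ?thesis using tau_pl_equivalent_tau_powi by simp
  next
    case False
    then have "tau_pl_equivalent 0 (of_nat n * tau powi k + tau powi k) 0 1"
      using Suc.IH tau_pl_equivalent_add tau_pl_equivalent_tau_powi by simp
    moreover have "of_nat (Suc n) * tau powi k = of_nat n * tau powi k + tau powi k"
      by (simp add: algebra_simps)
    ultimately show ?thesis by simp
  qed
qed simp

lemma tau_combination_nonpos:
  fixes m n :: int
  assumes "m \<le> 0" "n \<le> 0"
  shows "of_int m * tau powi j + of_int n * tau powi (j + 1) \<le> 0"
  by (intro add_nonpos_nonpos mult_nonpos_nonneg) (use assms less_imp_le[OF tau_powi_pos] in auto)

lemma tau_combination_nonneg_coeffs: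
  fixes m n :: int
  assumes "0 < of_int m * tau powi j + of_int n * tau powi (j + 1)"
  shows "\<exists>(p::nat) (q::nat) i.
    of_int m * tau powi j + of_int n * tau powi (j + 1) =
      of_nat p * tau powi i + of_nat q * tau powi (i + 1)"
  using assms
proof (induction "nat (\<bar>m\<bar> + \<bar>n\<bar>)" arbitrary: m n j rule: less_induct)
  case less
  show ?case
  proof (cases "0 \<le> m \<and> 0 \<le> n")
    case True
    then show ?thesis by (intro exI[of _ "nat m"] exI[of _ "nat n"] exI[of _ j]) simp
  next
    case mixed: False
    have "\<not> (m \<le> 0 \<and> n \<le> 0)" using less.prems tau_combination_nonpos[of m n j] by auto
    have step: "of_int m * tau powi j + of_int n * tau powi (j + 1) =
        of_int (m + n) * tau powi (j + 1) + of_int m * tau powi (j + 1 + 1)"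
      by (subst tau_powi_split) (simp add: algebra_simps)
    then have pos: "0 < of_int (m + n) * tau powi (j + 1) + of_int m * tau powi (j + 1 + 1)"
      using less.prems by simp
    show ?thesis
    proof (cases "0 \<le> m + n \<and> 0 \<le> m")
      case True
      then show ?thesis
        unfolding step by (intro exI[of _ "nat (m + n)"] exI[of _ "nat m"] exI[of _ "j + 1"]) simp
    next
      case False
      have "\<not> (m + n \<le> 0 \<and> m \<le> 0)" using pos tau_combination_nonpos[of "m + n" m "j + 1"] by auto
      \<comment> \<open>both coefficient pairs have mixed signs, which forces \<open>\<bar>m + n\<bar> < \<bar>n\<bar>\<close>\<close>
      then have "nat (\<bar>m + n\<bar> + \<bar>m\<bar>) < nat (\<bar>m\<bar> + \<bar>n\<bar>)"
        using mixed False \<open>\<not> (m \<le> 0 \<and> n \<le> 0)\<close> by arith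
      then show ?thesis using less.hyps[OF _ pos] step by simp
    qed
  qed
qed

lemma tau_pl_equivalent_unit_interval:
  assumes "a \<in> Ztau" "b \<in> Ztau" "a < b"
  shows "tau_pl_equivalent a b 0 1"
proof -
  obtain m n where "b - a = of_int m * tau powi 0 + of_int n * tau powi (0 + 1)"
    using Ztau_diff[OF assms(2,1)] unfolding Ztau_iff by auto
  then obtain p q :: nat and j
    where pq: "b - a = of_nat p * tau powi j + of_nat q * tau powi (j + 1)"
    using tau_combination_nonneg_coeffs[of m 0 n] assms(3) by auto
  have "tau_pl_equivalent 0 (b - a) 0 1"
  proof -
    consider "p = 0" | "q = 0" | "0 < p" "0 < q" by auto
    then show ?thesis
    proof cases
      case 1
      then show ?thesis
        using pq assms(3) tau_pl_equivalent_of_nat_mult[of q "j + 1"] by (cases "q = 0") auto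
    next
      case 2
      then show ?thesis
        using pq assms(3) tau_pl_equivalent_of_nat_mult[of p j] by (cases "p = 0") auto
    next
      case 3
      then show ?thesis
        unfolding pq by (simp add: tau_pl_equivalent_add tau_pl_equivalent_of_nat_mult)
    qed
  qed
  moreover have "tau_pl_equivalent a b 0 (b - a)"
    using tau_pl_equivalent_translate[of a b "- a"] assms by auto
  ultimately show ?thesis by (blast intro: tau_pl_equivalent_trans)
qed

subsection \<open>Conjugation\<close>

definition extend_by_translations ::
  "real \<Rightarrow> real \<Rightarrow> real \<Rightarrow> real \<Rightarrow> (real \<Rightarrow> real) \<Rightarrow> real \<Rightarrow> real" where
  "extend_by_translations a b c d h x =
    (if x < a then x - a + c else if x \<le> b then h x else x - b + d)"

lemma tau_pl_homeo_cong:
  assumes H: "tau_pl_homeo c d c' d' h g"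
    and "\<And>x. x \<in> {c..d} \<Longrightarrow> h' x = h x" "\<And>y. y \<in> {c'..d'} \<Longrightarrow> g' y = g y"
  shows "tau_pl_homeo c d c' d' h' g'"
proof -
  have "c < d" "c' < d'"
    using tau_pl_homeo_endpoints(1)[OF H] tau_pl_homeo_endpoints(1)[OF tau_pl_homeo_sym[OF H]] by auto
  moreover have "h x \<in> {c'..d'}" if "x \<in> {c..d}" for x
    using tau_pl_homeo_image[OF H] that by blast
  moreover have "g y \<in> {c..d}" if "y \<in> {c'..d'}" for y
    using tau_pl_homeo_image[OF tau_pl_homeo_sym[OF H]] that by blast
  moreover have "(\<exists>B. tau_pl_on c d B h') \<and> (\<exists>C. tau_pl_on c' d' C g')"
    using H tau_pl_on_cong assms(2,3) unfolding tau_pl_homeo_def by metis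
  ultimately show ?thesis using H assms(2,3) unfolding tau_pl_homeo_def by auto
qed

lemma tau_pl_homeo_extend_by_translations:
  assumes "tau_pl_homeo a b c d h g"
  shows "tau_pl_homeo a b c d (extend_by_translations a b c d h) (extend_by_translations c d a b g)"
  by (rule tau_pl_homeo_cong[OF assms]) (simp_all add: extend_by_translations_def)

lemma extend_by_translations_inverse:
  assumes H: "tau_pl_homeo a b c d h g"
  shows "extend_by_translations c d a b g (extend_by_translations a b c d h x) = x"
proof -
  consider "x < a" | "x \<in> {a..b}" | "b < x" by force
  then show ?thesis
  proof cases
    case 2
    then have "h x \<in> {c..d}" using tau_pl_homeo_image[OF H] by blast
    then show ?thesis using 2 H unfolding extend_by_translations_def tau_pl_homeo_def by auto
  qed (use tau_pl_homeo_endpoints(1)[OF H]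
      tau_pl_homeo_endpoints(1)[OF tau_pl_homeo_sym[OF H]] in \<open>auto simp: extend_by_translations_def\<close>)
qed

lemma tau_pl_homeo_extend:
  assumes "tau_pl_homeo a b c d h g"
  shows "\<exists>h' g'. tau_pl_homeo a b c d h' g' \<and> (\<forall>x. g' (h' x) = x) \<and> (\<forall>y. h' (g' y) = y)"
  using tau_pl_homeo_extend_by_translations[OF assms] extend_by_translations_inverse[OF assms]
    extend_by_translations_inverse[OF tau_pl_homeo_sym[OF assms]] by blast

lemma tau_pl_homeo_outside:
  assumes "tau_pl_homeo c d c' d' h g" "g (h x) = x" "x \<notin> {c..d}"
  shows "h x \<notin> {c'..d'}"
  using tau_pl_homeo_image[OF tau_pl_homeo_sym[OF assms(1)]] assms(2,3) by force

lemma supp_subset_iff: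
  assumes "\<forall>x. x \<notin> {0..1} \<longrightarrow> f x = x"
  shows "supp f \<subseteq> {a..b} \<longleftrightarrow> (\<forall>x. x \<notin> {a..b} \<longrightarrow> f x = x)"
proof
  assume "supp f \<subseteq> {a..b}"
  then show "\<forall>x. x \<notin> {a..b} \<longrightarrow> f x = x"
    using assms closure_subset[of "{x \<in> {0..1}. f x \<noteq> x}"] unfolding supp_def by blast
next
  assume "\<forall>x. x \<notin> {a..b} \<longrightarrow> f x = x"
  then have "{x \<in> {0..1}. f x \<noteq> x} \<subseteq> {a..b}" by blast
  then show "supp f \<subseteq> {a..b}" unfolding supp_def by (simp add: closure_minimal)
qed

lemma conjugate_into_F_tau:
  assumes H: "tau_pl_homeo a b 0 1 h g" and gh: "\<And>x. g (h x) = x" and hg: "\<And>y. h (g y) = y"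
    and "0 < a" "b < 1" and f: "F_tau_elem f" "supp f \<subseteq> {a..b}"
  shows "F_tau_elem (h \<circ> f \<circ> g)"
proof -
  obtain B where B: "tau_pl_on 0 1 B f" and out01: "\<forall>x. x \<notin> {0..1} \<longrightarrow> f x = x"
    using f(1) unfolding F_tau_elem_iff by blast
  have out: "f x = x" if "x \<notin> {a..b}" for x using f(2) out01 supp_subset_iff that by blast
  have "a < b" using tau_pl_homeo_endpoints[OF H] by simp
  have "f a = a"
    by (rule tau_pl_on_fixed_below[OF B]) (use \<open>0 < a\<close> \<open>a < b\<close> \<open>b < 1\<close> out in auto)
  moreover have "f b = b"
    by (rule tau_pl_on_fixed_above[OF B]) (use \<open>0 < a\<close> \<open>a < b\<close> \<open>b < 1\<close> out in auto)
  ultimately have im_f: "f ` {a..b} \<subseteq> {a..b}"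
    using tau_pl_on_image_subset[OF B, of a b] \<open>0 < a\<close> \<open>b < 1\<close> by simp
  obtain Bh Bg where Bh: "tau_pl_on a b Bh h" and Bg: "tau_pl_on 0 1 Bg g"
    using H unfolding tau_pl_homeo_def by blast
  have im_g: "g ` {0..1} \<subseteq> {a..b}" using tau_pl_homeo_image[OF tau_pl_homeo_sym[OF H]] .
  then have "g ` {0..1} \<subseteq> {0..1}" using \<open>0 < a\<close> \<open>b < 1\<close> by auto
  then obtain B1 where "tau_pl_on 0 1 B1 (f \<circ> g)" using tau_pl_on_comp[OF Bg B] by blast
  moreover have "(f \<circ> g) ` {0..1} \<subseteq> {a..b}" using im_f im_g by auto
  ultimately have "\<exists>B2. tau_pl_on 0 1 B2 (h \<circ> f \<circ> g)"
    using tau_pl_on_comp[OF _ Bh] by (metis comp_assoc)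
  moreover have "(h \<circ> f \<circ> g) y = y" if "y \<notin> {0..1}" for y
    using tau_pl_homeo_outside[OF tau_pl_homeo_sym[OF H] hg that] out hg by simp
  moreover have "g 0 = a" "g 1 = b" "h a = 0" "h b = 1"
    using H tau_pl_homeo_sym[OF H] unfolding tau_pl_homeo_def by auto
  ultimately show ?thesis
    unfolding F_tau_elem_iff using \<open>f a = a\<close> \<open>f b = b\<close> by auto
qed

lemma conjugate_into_F_tau_sub:
  assumes H: "tau_pl_homeo a b 0 1 h g" and gh: "\<And>x. g (h x) = x"
    and "0 < a" "b < 1" and k: "F_tau_elem k"
  shows "F_tau_elem (g \<circ> k \<circ> h)" "supp (g \<circ> k \<circ> h) \<subseteq> {a..b}"
proof -
  obtain Bk where Bk: "tau_pl_on 0 1 Bk k" and out01: "\<forall>y. y \<notin> {0..1} \<longrightarrow> k y = y"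
    and "k 0 = 0" "k 1 = 1"
    using k unfolding F_tau_elem_iff by blast
  have out: "(g \<circ> k \<circ> h) x = x" if "x \<notin> {a..b}" for x
    using tau_pl_homeo_outside[OF H gh that] out01 gh by simp
  have ends: "(g \<circ> k \<circ> h) a = a" "(g \<circ> k \<circ> h) b = b"
    using H tau_pl_homeo_sym[OF H] \<open>k 0 = 0\<close> \<open>k 1 = 1\<close> unfolding tau_pl_homeo_def by auto
  obtain Bh Bg where Bh: "tau_pl_on a b Bh h" and Bg: "tau_pl_on 0 1 Bg g"
    using H unfolding tau_pl_homeo_def by blast
  have "k ` {0..1} \<subseteq> {0..1}"
    using tau_pl_on_image_subset[OF Bk, of 0 1] \<open>k 0 = 0\<close> \<open>k 1 = 1\<close> by simp
  then obtain B1 where "tau_pl_on a b B1 (k \<circ> h)"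
    using tau_pl_on_comp[OF Bh Bk] tau_pl_homeo_image[OF H] by blast
  moreover have "(k \<circ> h) ` {a..b} \<subseteq> {0..1}"
    using tau_pl_homeo_image[OF H] \<open>k ` {0..1} \<subseteq> {0..1}\<close> by auto
  ultimately obtain B2 where B2: "tau_pl_on a b B2 (g \<circ> k \<circ> h)"
    using tau_pl_on_comp[OF _ Bg] by (metis comp_assoc)
  have fixed: "(g \<circ> k \<circ> h) x = x" if "x \<in> {0..a} \<union> {b..1}" for x
    using that ends out by (cases "x = a \<or> x = b") auto
  have "a \<in> Ztau" "b \<in> Ztau" "a < b" using tau_pl_homeo_endpoints[OF H] by auto
  then have "tau_pl_on 0 a {0, a} (g \<circ> k \<circ> h)" "tau_pl_on b 1 {b, 1} (g \<circ> k \<circ> h)"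
    using fixed \<open>0 < a\<close> \<open>b < 1\<close> by (auto intro!: tau_pl_on_identity simp del: comp_apply)
  then have "tau_pl_on 0 1 ({0, a} \<union> B2 \<union> {b, 1}) (g \<circ> k \<circ> h)"
    using B2 by (blast intro: tau_pl_on_concat)
  moreover have "\<forall>x. x \<notin> {0..1} \<longrightarrow> (g \<circ> k \<circ> h) x = x"
    using out \<open>0 < a\<close> \<open>b < 1\<close> by auto
  ultimately show "F_tau_elem (g \<circ> k \<circ> h)"
    unfolding F_tau_elem_iff using out \<open>0 < a\<close> \<open>b < 1\<close> by auto
  show "supp (g \<circ> k \<circ> h) \<subseteq> {a..b}"
    using supp_subset_iff \<open>\<forall>x. x \<notin> {0..1} \<longrightarrow> (g \<circ> k \<circ> h) x = x\<close> out by blast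
qed

lemma conjugation_iso_F_tau_sub_F_tau:
  assumes H: "tau_pl_homeo a b 0 1 h g" and gh: "\<And>x. g (h x) = x" and hg: "\<And>y. h (g y) = y"
    and "0 < a" "b < 1"
  shows "(\<lambda>f. h \<circ> f \<circ> g) \<in> iso (F_tau_sub a b) F_tau"
proof (rule isoI)
  note to_F_tau = conjugate_into_F_tau[OF H gh hg assms(4,5)]
    and to_F_tau_sub = conjugate_into_F_tau_sub[OF H gh assms(4,5)]
  show "(\<lambda>f. h \<circ> f \<circ> g) \<in> hom (F_tau_sub a b) F_tau"
    using to_F_tau gh by (intro homI) (auto simp: F_tau_sub_def F_tau_def fun_eq_iff)
  show "bij_betw (\<lambda>f. h \<circ> f \<circ> g) (carrier (F_tau_sub a b)) (carrier F_tau)"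
    using to_F_tau to_F_tau_sub gh hg by (intro bij_betwI[where g = "\<lambda>k. g \<circ> k \<circ> h"])
      (auto simp: F_tau_sub_def F_tau_def fun_eq_iff)
qed

theorem mainTheorem13:
  fixes a b :: real
  assumes "a \<in> Ztau" and "b \<in> Ztau" and "0 < a" and "a < b" and "b < 1"
  shows "F_tau_sub a b \<cong> F_tau"
proof -
  obtain h0 g0 where "tau_pl_homeo a b 0 1 h0 g0"
    using tau_pl_equivalent_unit_interval[OF assms(1,2,4)] unfolding tau_pl_equivalent_def by blast
  then obtain h g where H: "tau_pl_homeo a b 0 1 h g" "\<forall>x. g (h x) = x" "\<forall>y. h (g y) = y"
    using tau_pl_homeo_extend by blast
  then have "(\<lambda>f. h \<circ> f \<circ> g) \<in> iso (F_tau_sub a b) F_tau"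
    using conjugation_iso_F_tau_sub_F_tau[OF H(1) H(2,3)[rule_format] assms(3,5)] by blast
  then show ?thesis unfolding is_iso_def by blast
qed

end
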